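(* Let $u\in\mathbb{R}^3$ with $\kappa(u)>2$. Then there exists $\gamma\in\Gamma$ such that $\tilde u=\gamma u=(\tilde x,\tilde y,\tilde z)$ satisfies either $\tilde u\in(-\infty,-2]^3$, or $\tilde x\in[-2,2]$. (In the first case $\tilde u$ is the character of a Fuchsian representation whose quotient is a hyperbolic three-holed sphere, with boundary corresponding to cusps or closed geodesics; in the second, $\tilde u$ is the character of a representation mapping $X$ to a non-hyperbolic element.)
   Context: $\kappa(x,y,z)=x^2+y^2+z^2-xyz-2$. $\Gamma$ denotes the group of polynomial automorphisms of $\mathbb{C}^3$ generated by: all permutations of the coordinates $x,y,z$; the three sign changes $(x,y,z)\mapsto(x,-y,-z)$, $(x,y,z)\mapsto(-x,y,-z)$, $(x,y,z)\mapsto(-x,-y,z)$; and the quadratic reflection $(x,y,z)\mapsto(yz-x,y,z)$. Every element of $\Gamma$ preserves $\kappa$ and maps $\mathbb{R}^3$ to itself. A point $(x,y,z)$ is viewed as the character $(\mathrm{tr}\rho(X),\mathrm{tr}\rho(Y),\mathrm{tr}\rho(XY))$ of a representation $\rho$ of the free group $\langle X,Y\rangle$ into $\mathrm{SL}(2,\mathbb{C})$. *)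

theory Defs
  imports Complex_Main
begin

type_synonym pt = "complex \<times> complex \<times> complex"

definition kappa :: "pt \<Rightarrow> complex" where
  "kappa p = (case p of (x,y,z) \<Rightarrow> x^2 + y^2 + z^2 - x*y*z - 2)"

definition gen_maps :: "(pt \<Rightarrow> pt) set" where
  "gen_maps =
    { (\<lambda>(x,y,z). (y,x,z)), (\<lambda>(x,y,z). (x,z,y)), (\<lambda>(x,y,z). (z,y,x)),
      (\<lambda>(x,y,z). (y,z,x)), (\<lambda>(x,y,z). (z,x,y)),
      (\<lambda>(x,y,z). (x,-y,-z)), (\<lambda>(x,y,z). (-x,y,-z)), (\<lambda>(x,y,z). (-x,-y,z)),
      (\<lambda>(x,y,z). (y*z - x, y, z)) }"

text \<open>All generators are
  bijections whose inverses are again words in the generators (each is an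
  involution or a product of transpositions), so the group is the closure of
  the identity under composition with generators; we also close under inverses
  explicitly for fidelity.\<close>
inductive_set Gamma :: "(pt \<Rightarrow> pt) set" where
  Gamma_id: "id \<in> Gamma"
| Gamma_gen: "g \<in> gen_maps \<Longrightarrow> g \<in> Gamma"
| Gamma_comp: "f \<in> Gamma \<Longrightarrow> g \<in> Gamma \<Longrightarrow> f \<circ> g \<in> Gamma"
| Gamma_inv: "f \<in> Gamma \<Longrightarrow> bij f \<Longrightarrow> inv f \<in> Gamma"

definition real_pt :: "real \<times> real \<times> real \<Rightarrow> pt" where
  "real_pt p = (case p of (x,y,z) \<Rightarrow> (complex_of_real x, complex_of_real y, complex_of_real z))"

end

theory Submission
  imports Defs
begin

text \<open>Since \<open>\<kappa>\<close> is \<open>\<Gamma>\<close>-invariant, it suffices to move \<open>u\<close> by generators.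
  A coordinate in \<open>[-2,2]\<close> can be permuted to the front; otherwise sign changes
  make all coordinates \<open>> 2\<close> or all \<open>< -2\<close>. For \<open>x \<ge> y \<ge> z > 2\<close> the reflection
  \<open>x \<mapsto> yz - x\<close> lowers \<open>x + y + z\<close> by \<open>2x - yz\<close>, and from
  \<open>(2x - yz)\<^sup>2 = (y\<^sup>2 - 4)(z\<^sup>2 - 4) + 4(\<kappa> - 2)\<close> together with \<open>2x > yz\<close> this drop is at
  least \<open>2 sqrt(\<kappa> - 2)\<close>. Hence after finitely many reflections some coordinate
  leaves \<open>(2,\<infinity>)\<close>.\<close>

definition kappa_real :: "real \<Rightarrow> real \<Rightarrow> real \<Rightarrow> real" where
  "kappa_real x y z = x\<^sup>2 + y\<^sup>2 + z\<^sup>2 - x * y * z - 2"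

lemma kappa_real_pt: "kappa (real_pt (x, y, z)) = complex_of_real (kappa_real x y z)"
  by (simp add: kappa_def real_pt_def kappa_real_def)

lemma kappa_real_swap12: "kappa_real y x z = kappa_real x y z"
  and kappa_real_swap23: "kappa_real x z y = kappa_real x y z"
  and kappa_real_neg23: "kappa_real x (-y) (-z) = kappa_real x y z"
  and kappa_real_neg13: "kappa_real (-x) y (-z) = kappa_real x y z"
  and kappa_real_neg12: "kappa_real (-x) (-y) z = kappa_real x y z"
  and kappa_real_reflect: "kappa_real (y * z - x) y z = kappa_real x y z"
  unfolding kappa_real_def by (simp_all add: power2_eq_square algebra_simps)

definition reducible :: "real \<Rightarrow> real \<Rightarrow> real \<Rightarrow> bool" where
  "reducible x y z \<longleftrightarrow> (\<exists>\<gamma>\<in>Gamma. \<exists>x' y' z' :: real.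
     \<gamma> (real_pt (x, y, z)) = real_pt (x', y', z') \<and>
     ((x' \<le> -2 \<and> y' \<le> -2 \<and> z' \<le> -2) \<or> (-2 \<le> x' \<and> x' \<le> 2)))"

lemma reducible_if_first_in_interval: "-2 \<le> x \<Longrightarrow> x \<le> 2 \<Longrightarrow> reducible x y z"
  unfolding reducible_def by (rule bexI[of _ id]) (auto intro: Gamma_id)

lemma reducible_if_all_le_neg2: "x \<le> -2 \<Longrightarrow> y \<le> -2 \<Longrightarrow> z \<le> -2 \<Longrightarrow> reducible x y z"
  unfolding reducible_def by (rule bexI[of _ id]) (auto intro: Gamma_id)

lemma reducible_Gamma_image:
  assumes "\<gamma> \<in> Gamma" "\<gamma> (real_pt (x, y, z)) = real_pt (a, b, c)" "reducible a b c"
  shows "reducible x y z"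
proof -
  from \<open>reducible a b c\<close> obtain \<delta> x' y' z' where "\<delta> \<in> Gamma"
    and \<delta>: "\<delta> (real_pt (a, b, c)) = real_pt (x', y', z')"
    and target: "(x' \<le> -2 \<and> y' \<le> -2 \<and> z' \<le> -2) \<or> (-2 \<le> x' \<and> x' \<le> 2)"
    unfolding reducible_def by blast
  have "\<delta> \<circ> \<gamma> \<in> Gamma" using \<open>\<delta> \<in> Gamma\<close> \<open>\<gamma> \<in> Gamma\<close> by (rule Gamma_comp)
  moreover have "(\<delta> \<circ> \<gamma>) (real_pt (x, y, z)) = real_pt (x', y', z')"
    using assms(2) \<delta> by simp
  ultimately show ?thesis using target unfolding reducible_def by blast
qed

lemma reducible_generator_image:
  assumes "g \<in> gen_maps" "g (real_pt (x, y, z)) = real_pt (a, b, c)" "reducible a b c"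
  shows "reducible x y z"
  using Gamma_gen[OF assms(1)] assms(2,3) by (rule reducible_Gamma_image)

lemma reducible_swap12: "reducible y x z \<Longrightarrow> reducible x y z"
  by (rule reducible_generator_image[of "\<lambda>(x, y, z). (y, x, z)"])
     (auto simp: gen_maps_def real_pt_def)

lemma reducible_swap23: "reducible x z y \<Longrightarrow> reducible x y z"
  by (rule reducible_generator_image[of "\<lambda>(x, y, z). (x, z, y)"])
     (auto simp: gen_maps_def real_pt_def)

lemma reducible_swap13: "reducible z y x \<Longrightarrow> reducible x y z"
  by (rule reducible_generator_image[of "\<lambda>(x, y, z). (z, y, x)"])
     (auto simp: gen_maps_def real_pt_def)

lemma reducible_neg23: "reducible x (-y) (-z) \<Longrightarrow> reducible x y z"
  by (rule reducible_generator_image[of "\<lambda>(x, y, z). (x, -y, -z)"])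
     (auto simp: gen_maps_def real_pt_def)

lemma reducible_neg13: "reducible (-x) y (-z) \<Longrightarrow> reducible x y z"
  by (rule reducible_generator_image[of "\<lambda>(x, y, z). (-x, y, -z)"])
     (auto simp: gen_maps_def real_pt_def)

lemma reducible_neg12: "reducible (-x) (-y) z \<Longrightarrow> reducible x y z"
  by (rule reducible_generator_image[of "\<lambda>(x, y, z). (-x, -y, z)"])
     (auto simp: gen_maps_def real_pt_def)

lemma reducible_reflect: "reducible (y * z - x) y z \<Longrightarrow> reducible x y z"
  by (rule reducible_generator_image[of "\<lambda>(x, y, z). (y * z - x, y, z)"])
     (auto simp: gen_maps_def real_pt_def)

lemma reducible_wlog_sorted:
  assumes sorted: "\<And>x y z. x \<ge> y \<Longrightarrow> y \<ge> z \<Longrightarrow> P x y z \<Longrightarrow> reducible x y z"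
    and P_swap12: "\<And>x y z. P x y z \<Longrightarrow> P y x z"
    and P_swap23: "\<And>x y z. P x y z \<Longrightarrow> P x z y"
    and "P x y z"
  shows "reducible x y z"
proof -
  consider "x \<ge> y" "y \<ge> z" | "x \<ge> z" "z \<ge> y" | "y \<ge> x" "x \<ge> z"
    | "y \<ge> z" "z \<ge> x" | "z \<ge> x" "x \<ge> y" | "z \<ge> y" "y \<ge> x"
    by linarith
  then show ?thesis
  proof cases
    case 1
    then show ?thesis using \<open>P x y z\<close> by (rule sorted)
  next
    case 2
    have "P x z y" by (rule P_swap23) fact
    from reducible_swap23[OF sorted[OF 2 this]] show ?thesis .
  next
    case 3
    have "P y x z" by (rule P_swap12) fact
    from reducible_swap12[OF sorted[OF 3 this]] show ?thesis .
  next
    case 4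
    have "P y z x" by (rule P_swap23, rule P_swap12) fact
    from reducible_swap12[OF reducible_swap23[OF sorted[OF 4 this]]] show ?thesis .
  next
    case 5
    have "P z x y" by (rule P_swap12, rule P_swap23) fact
    from reducible_swap23[OF reducible_swap12[OF sorted[OF 5 this]]] show ?thesis .
  next
    case 6
    have "P z y x" by (rule P_swap12, rule P_swap23, rule P_swap12) fact
    from reducible_swap13[OF sorted[OF 6 this]] show ?thesis .
  qed
qed

lemma reflection_drop_lower_bound:
  assumes "x \<ge> y" "y \<ge> z" "z > 2" "kappa_real x y z > 2"
  shows "2 * sqrt (kappa_real x y z - 2) \<le> 2 * x - y * z"
proof -
  let ?k = "kappa_real x y z"
  define f where "f t = t\<^sup>2 - y * z * t + y\<^sup>2 + z\<^sup>2 - 2 - ?k" for t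
  have "f x = 0"
    unfolding f_def kappa_real_def by (simp add: power2_eq_square algebra_simps)
  have "f y < 0"
  proof -
    have "y\<^sup>2 * (2 - z) \<le> z\<^sup>2 * (2 - z)"
      using assms by (intro mult_right_mono_neg power_mono) auto
    moreover have "z\<^sup>2 * (2 - z) + z\<^sup>2 - 4 = - ((z - 2)\<^sup>2 * (z + 1))"
      by (simp add: power2_eq_square algebra_simps)
    moreover have "(z - 2)\<^sup>2 * (z + 1) \<ge> 0" using assms by simp
    ultimately show ?thesis
      unfolding f_def using assms(4) by (simp add: power2_eq_square algebra_simps)
  qed
  have "y * z < 2 * x"
  proof (rule ccontr)
    assume "\<not> y * z < 2 * x"
    then have "(x - y) * (x + y - y * z) \<le> 0"
      using assms by (intro mult_nonneg_nonpos) auto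
    moreover have "(x - y) * (x + y - y * z) = f x - f y"
      unfolding f_def by (simp add: power2_eq_square algebra_simps)
    ultimately show False using \<open>f x = 0\<close> \<open>f y < 0\<close> by linarith
  qed
  have "y\<^sup>2 \<ge> 4" "z\<^sup>2 \<ge> 4"
    using assms power_mono[of 2 y 2] power_mono[of 2 z 2] by auto
  then have "(y\<^sup>2 - 4) * (z\<^sup>2 - 4) \<ge> 0" by simp
  moreover have "(2 * x - y * z)\<^sup>2 = (y\<^sup>2 - 4) * (z\<^sup>2 - 4) + 4 * (?k - 2)"
    using \<open>f x = 0\<close> unfolding f_def by (simp add: power2_eq_square algebra_simps)
  ultimately have "(2 * sqrt (?k - 2))\<^sup>2 \<le> (2 * x - y * z)\<^sup>2"
    using assms(4) by (simp add: power_mult_distrib)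
  then show ?thesis
    by (rule power2_le_imp_le) (use \<open>y * z < 2 * x\<close> in linarith)
qed

lemma reducible_by_descent:
  assumes "\<kappa> > 2"
  shows "x > 2 \<Longrightarrow> y > 2 \<Longrightarrow> z > 2 \<Longrightarrow> kappa_real x y z = \<kappa>
    \<Longrightarrow> x + y + z \<le> real n * (2 * sqrt (\<kappa> - 2)) \<Longrightarrow> reducible x y z"
proof (induction n arbitrary: x y z)
  case 0
  then show ?case by simp
next
  case (Suc n)
  let ?\<delta> = "2 * sqrt (\<kappa> - 2)"
  define P where "P a b c \<longleftrightarrow> a > 2 \<and> b > 2 \<and> c > 2 \<and> kappa_real a b c = \<kappa> \<and>
    a + b + c \<le> real (Suc n) * ?\<delta>" for a b c
  show ?case
  proof (rule reducible_wlog_sorted[where P = P])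
    fix a b c
    assume "a \<ge> b" "b \<ge> c" "P a b c"
    then have abc: "a > 2" "b > 2" "c > 2" "kappa_real a b c = \<kappa>"
      "a + b + c \<le> real n * ?\<delta> + ?\<delta>"
      unfolding P_def by (auto simp: algebra_simps)
    let ?a = "b * c - a"
    have "kappa_real a b c > 2" using abc(4) assms by simp
    from reflection_drop_lower_bound[OF \<open>a \<ge> b\<close> \<open>b \<ge> c\<close> abc(3) this]
    have drop: "?\<delta> \<le> 2 * a - b * c" by (simp only: abc(4))
    have "kappa_real ?a b c = \<kappa>" using abc(4) by (simp add: kappa_real_reflect)
    consider "?a > 2" | "-2 \<le> ?a" "?a \<le> 2" | "?a < -2" by linarith
    then have "reducible ?a b c"
    proof cases
      case 1
      have "?a + b + c \<le> real n * ?\<delta>" using abc(5) drop by linarith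
      with 1 abc \<open>kappa_real ?a b c = \<kappa>\<close> show ?thesis by (intro Suc.IH) auto
    next
      case 2
      then show ?thesis by (rule reducible_if_first_in_interval)
    next
      case 3
      show ?thesis
        by (rule reducible_neg23, rule reducible_if_all_le_neg2) (use 3 abc in auto)
    qed
    then show "reducible a b c" by (rule reducible_reflect)
  next
    show "P x y z" unfolding P_def using Suc.prems by simp
  next
    show "P b a c" if "P a b c" for a b c
      using that unfolding P_def by (simp add: kappa_real_swap12 ac_simps)
  next
    show "P a c b" if "P a b c" for a b c
      using that unfolding P_def by (simp add: kappa_real_swap23 ac_simps)
  qed
qed

lemma reducible_if_all_gt_2:
  assumes "kappa_real x y z > 2" "x > 2" "y > 2" "z > 2"
  shows "reducible x y z"
proof -
  have "2 * sqrt (kappa_real x y z - 2) > 0" using assms(1) by simp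
  then obtain n where "x + y + z < real n * (2 * sqrt (kappa_real x y z - 2))"
    using reals_Archimedean3 by blast
  then show ?thesis
    by (intro reducible_by_descent[OF assms(1) assms(2-4) refl] less_imp_le)
qed

lemma reducible_if_all_abs_gt_2:
  assumes "kappa_real x y z > 2" "\<bar>x\<bar> > 2" "\<bar>y\<bar> > 2" "\<bar>z\<bar> > 2"
  shows "reducible x y z"
proof -
  have last_two_gt_2: "reducible x y z"
    if "kappa_real x y z > 2" "\<bar>x\<bar> > 2" "y > 2" "z > 2" for x y z
  proof (cases "x > 2")
    case True
    with that show ?thesis by (intro reducible_if_all_gt_2)
  next
    case False
    show ?thesis
      by (rule reducible_neg23, rule reducible_if_all_le_neg2) (use False that in auto)
  qed
  consider "y > 2" "z > 2" | "y < -2" "z < -2" | "y < -2" "z > 2" | "y > 2" "z < -2"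
    using assms(3,4) by linarith
  then show ?thesis
  proof cases
    case 1
    with assms show ?thesis by (intro last_two_gt_2)
  next
    case 2
    with assms show ?thesis by (intro reducible_neg23[OF last_two_gt_2]) (auto simp: kappa_real_neg23)
  next
    case 3
    with assms show ?thesis by (intro reducible_neg12[OF last_two_gt_2]) (auto simp: kappa_real_neg12)
  next
    case 4
    with assms show ?thesis by (intro reducible_neg13[OF last_two_gt_2]) (auto simp: kappa_real_neg13)
  qed
qed

theorem mainTheorem10:
  fixes x y z :: real
  assumes "Re (kappa (real_pt (x,y,z))) > 2"
  shows "\<exists>\<gamma>\<in>Gamma. \<exists>x' y' z' :: real.
           \<gamma> (real_pt (x,y,z)) = real_pt (x',y',z') \<and>
           ((x' \<le> -2 \<and> y' \<le> -2 \<and> z' \<le> -2) \<or> (-2 \<le> x' \<and> x' \<le> 2))"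
proof -
  have \<kappa>: "kappa_real x y z > 2" using assms by (simp add: kappa_real_pt)
  consider "\<bar>x\<bar> \<le> 2" | "\<bar>y\<bar> \<le> 2" | "\<bar>z\<bar> \<le> 2" | "\<bar>x\<bar> > 2" "\<bar>y\<bar> > 2" "\<bar>z\<bar> > 2"
    by linarith
  then have "reducible x y z"
  proof cases
    case 1
    then show ?thesis by (intro reducible_if_first_in_interval) auto
  next
    case 2
    then show ?thesis by (intro reducible_swap12[OF reducible_if_first_in_interval]) auto
  next
    case 3
    then show ?thesis by (intro reducible_swap13[OF reducible_if_first_in_interval]) auto
  next
    case 4
    with \<kappa> show ?thesis by (rule reducible_if_all_abs_gt_2)
  qed
  then show ?thesis unfolding reducible_def .
qed

end
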